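(* Let $G$ be a directed graph on $V=\{v_1,\dots,v_n\}$ with edge set $E$. Let $\mathbb F$ be a field and $k\ge1$. Let $\chi:V\to\mathbb F^k$ be any map, and let $y_{ij}\in\mathbb F$ be scalars for all ordered pairs $(i,j)$. Let $E^+$ be a finite set of ordered pairs not in $E$ (inserted edges), and let $E^-\subseteq E$ (deleted edges). Let $G'$ be the directed graph on $V$ with edge set $(E\setminus E^-)\cup E^+$. Define $Q$, $S$, $F$, $\mathcal Z$ for $G$, and $\mathcal Z_{\mathrm{new}}$ for $G'$, as in the context. Let $I\subseteq[n]$ be the set of indices $i$ such that $v_i$ is an endpoint of an edge in $E^+\cup E^-$. Let $Q'=(Q[i,j])_{i,j\in I}$, and let $S'=(S[i])_{i\in I}$, $F'=(F[i])_{i\in I}$ be column vectors. Define the $I\times I$ matrix $\Delta$ by $\Delta[i,j]=y_{ij}$ if $(v_i,v_j)\in E^+$, $\Delta[i,j]=-y_{ij}$ if $(v_i,v_j)\in E^-$, and $\Delta[i,j]=0$ otherwise. Then $$\mathcal Z_{\mathrm{new}}=\mathcal Z+\sum_{i=1}^{k}F'^{T}\,\Delta\,(Q'\Delta)^{i-1}\,S',$$ where all matrix and vector products are taken over the (noncommutative) ring $\Lambda(\mathbb F^k)$, multiplying entries in left-to-right order.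
   Context: $\Lambda(\mathbb F^k)$ is the exterior algebra over $\mathbb F^k$, with product $\wedge$. A vector $v\in\mathbb F^k$ is identified with $\sum_i v[i]e_i\in\Lambda(\mathbb F^k)$, and field scalars commute with everything. A walk in a directed graph $H$ is a sequence $w=(w_1,\dots,w_s)$, $s\ge1$, of vertices with $(w_r,w_{r+1})$ an edge of $H$ for all $r<s$. Vertices may repeat. Its walk extensor is $$\chi(w)=\chi(w_1)\wedge y_{w_1w_2}\chi(w_2)\wedge\cdots\wedge y_{w_{s-1}w_s}\chi(w_s),$$ where $y_{v_av_b}$ means $y_{ab}$. Any walk with more than $k$ vertices has $\chi(w)=0$. For $H=G$, $Q[i,j]$ is the sum of $\chi(w)$ over all walks in $G$ from $v_i$ to $v_j$ with at most $k$ vertices (equivalently, over all walks). Further, $S[i]=\sum_jQ[i,j]$, $F[j]=\sum_iQ[i,j]$ and $\mathcal Z=\sum_{i,j}Q[i,j]$. The quantity $\mathcal Z_{\mathrm{new}}$ is the sum of $\chi(w)$ over all walks $w$ in $G'$ with at most $k$ vertices. *)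

theory Defs
  imports Main
begin

text \<open>An element of the exterior algebra is represented by its coefficient function on
  the basis monomials e_S = e_{s1} wedge ... wedge e_{sm} (s1 < ... < sm), indexed by finite
  sets S of basis indices. Elements of Lambda(F^k) are those supported on subsets of
  {0..<k}; all operations below preserve this.\<close>

type_synonym 'a ext = "nat set \<Rightarrow> 'a"

definition ext_sign :: "nat set \<Rightarrow> nat set \<Rightarrow> 'a::comm_ring_1" where
  "ext_sign A B = (-1) ^ card {(a, b). a \<in> A \<and> b \<in> B \<and> b < a}"

definition ext_wedge :: "'a::comm_ring_1 ext \<Rightarrow> 'a ext \<Rightarrow> 'a ext" where
  "ext_wedge x y = (\<lambda>S. \<Sum>A\<in>Pow S. ext_sign A (S - A) * x A * y (S - A))"

definition ext_zero :: "'a::comm_ring_1 ext" where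
  "ext_zero = (\<lambda>S. 0)"

definition ext_add :: "'a::comm_ring_1 ext \<Rightarrow> 'a ext \<Rightarrow> 'a ext" where
  "ext_add x y = (\<lambda>S. x S + y S)"

definition ext_sum :: "('b \<Rightarrow> 'a::comm_ring_1 ext) \<Rightarrow> 'b set \<Rightarrow> 'a ext" where
  "ext_sum f A = (\<lambda>S. \<Sum>a\<in>A. f a S)"

definition ext_scalar :: "'a::comm_ring_1 \<Rightarrow> 'a ext" where
  "ext_scalar c = (\<lambda>S. if S = {} then c else 0)"

definition ext_vec :: "nat \<Rightarrow> (nat \<Rightarrow> 'a::comm_ring_1) \<Rightarrow> 'a ext" where
  "ext_vec k v = (\<lambda>S. \<Sum>i<k. if S = {i} then v i else 0)"

text \<open>Vertices v_1..v_n are represented by indices 0..<n; edges are pairs of indices.\<close>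

fun is_walk :: "(nat \<times> nat) set \<Rightarrow> nat list \<Rightarrow> bool" where
  "is_walk E [] = False"
| "is_walk E [v] = True"
| "is_walk E (v # u # w) = ((v, u) \<in> E \<and> is_walk E (u # w))"

definition walks :: "nat \<Rightarrow> (nat \<times> nat) set \<Rightarrow> nat list set" where
  "walks n E = {w. is_walk E w \<and> set w \<subseteq> {..<n}}"

fun walk_ext :: "nat \<Rightarrow> (nat \<Rightarrow> nat \<Rightarrow> 'a::comm_ring_1) \<Rightarrow> (nat \<Rightarrow> nat \<Rightarrow> 'a)
                  \<Rightarrow> nat list \<Rightarrow> 'a ext" where
  "walk_ext k \<chi> y [] = ext_scalar 1"
| "walk_ext k \<chi> y [v] = ext_vec k (\<chi> v)"
| "walk_ext k \<chi> y (v # u # w) =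
     ext_wedge (ext_vec k (\<chi> v)) (ext_wedge (ext_scalar (y v u)) (walk_ext k \<chi> y (u # w)))"

definition Qmat :: "nat \<Rightarrow> nat \<Rightarrow> (nat \<times> nat) set \<Rightarrow> (nat \<Rightarrow> nat \<Rightarrow> 'a::comm_ring_1)
                      \<Rightarrow> (nat \<Rightarrow> nat \<Rightarrow> 'a) \<Rightarrow> nat \<Rightarrow> nat \<Rightarrow> 'a ext" where
  "Qmat k n E \<chi> y i j =
     ext_sum (walk_ext k \<chi> y) {w \<in> walks n E. length w \<le> k \<and> hd w = i \<and> last w = j}"

definition Svec :: "nat \<Rightarrow> nat \<Rightarrow> (nat \<times> nat) set \<Rightarrow> (nat \<Rightarrow> nat \<Rightarrow> 'a::comm_ring_1)
                      \<Rightarrow> (nat \<Rightarrow> nat \<Rightarrow> 'a) \<Rightarrow> nat \<Rightarrow> 'a ext" where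
  "Svec k n E \<chi> y i = ext_sum (\<lambda>j. Qmat k n E \<chi> y i j) {..<n}"

definition Fvec :: "nat \<Rightarrow> nat \<Rightarrow> (nat \<times> nat) set \<Rightarrow> (nat \<Rightarrow> nat \<Rightarrow> 'a::comm_ring_1)
                      \<Rightarrow> (nat \<Rightarrow> nat \<Rightarrow> 'a) \<Rightarrow> nat \<Rightarrow> 'a ext" where
  "Fvec k n E \<chi> y j = ext_sum (\<lambda>i. Qmat k n E \<chi> y i j) {..<n}"

definition Zsum :: "nat \<Rightarrow> nat \<Rightarrow> (nat \<times> nat) set \<Rightarrow> (nat \<Rightarrow> nat \<Rightarrow> 'a::comm_ring_1)
                      \<Rightarrow> (nat \<Rightarrow> nat \<Rightarrow> 'a) \<Rightarrow> 'a ext" where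
  "Zsum k n E \<chi> y = ext_sum (\<lambda>(i, j). Qmat k n E \<chi> y i j) ({..<n} \<times> {..<n})"

definition Zwalks :: "nat \<Rightarrow> nat \<Rightarrow> (nat \<times> nat) set \<Rightarrow> (nat \<Rightarrow> nat \<Rightarrow> 'a::comm_ring_1)
                      \<Rightarrow> (nat \<Rightarrow> nat \<Rightarrow> 'a) \<Rightarrow> 'a ext" where
  "Zwalks k n E \<chi> y = ext_sum (walk_ext k \<chi> y) {w \<in> walks n E. length w \<le> k}"

definition ext_mat_mul :: "nat set \<Rightarrow> (nat \<Rightarrow> nat \<Rightarrow> 'a::comm_ring_1 ext)
                             \<Rightarrow> (nat \<Rightarrow> nat \<Rightarrow> 'a ext) \<Rightarrow> nat \<Rightarrow> nat \<Rightarrow> 'a ext" where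
  "ext_mat_mul I A B = (\<lambda>i j. ext_sum (\<lambda>l. ext_wedge (A i l) (B l j)) I)"

fun ext_mat_pow :: "nat set \<Rightarrow> (nat \<Rightarrow> nat \<Rightarrow> 'a::comm_ring_1 ext) \<Rightarrow> nat
                      \<Rightarrow> nat \<Rightarrow> nat \<Rightarrow> 'a ext" where
  "ext_mat_pow I A 0 = (\<lambda>i j. if i = j then ext_scalar 1 else ext_zero)"
| "ext_mat_pow I A (Suc m) = ext_mat_mul I (ext_mat_pow I A m) A"

end

theory Submission
  imports Defs "HOL-Library.Function_Algebras"
begin

text \<open>Group the walks by their number of edges. With X the diagonal matrix of the
  vectors \<chi>(v_i) and B[i,l] = \<chi>(v_i) y_il for (v_i,v_l) \<in> E, the walks with m edges
  contribute B^m X. Updating the edges replaces B by B + X\<Delta>, so every walk of G' is a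
  walk of G followed by a \<Delta>-step and a walk of G', which gives Q' = Q + Q\<Delta>Q'.
  A walk with m vertices has an extensor of degree m, so any product of degree > k
  vanishes; iterating the identity k times therefore yields
  Q' = Q + \<Sum>(t = 1..k) Q\<Delta>(Q\<Delta>)^(t-1)Q, in which only the rows and columns of \<Delta> indexed by I
  occur. Summing all entries gives the formula.\<close>

section \<open>The exterior algebra\<close>

lemma sum_fun_apply: "(\<Sum>a\<in>A. f a) x = (\<Sum>a\<in>A. f a x)"
  by (induction A rule: infinite_finite_induct) auto

lemma ext_sum_eq_sum: "ext_sum f A = sum f A"
  by (simp add: ext_sum_def fun_eq_iff sum_fun_apply)

lemma ext_add_eq_plus: "ext_add x y = x + y"
  by (simp add: ext_add_def fun_eq_iff)

lemma ext_zero_eq_zero: "ext_zero = 0"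
  by (simp add: ext_zero_def fun_eq_iff)

lemma ext_scalar_uminus: "ext_scalar (- c) = - ext_scalar c"
  by (simp add: ext_scalar_def fun_eq_iff)

lemma ext_wedge_zero_left [simp]: "ext_wedge 0 y = 0"
  by (simp add: ext_wedge_def fun_eq_iff)

lemma ext_wedge_zero_right [simp]: "ext_wedge x 0 = 0"
  by (simp add: ext_wedge_def fun_eq_iff)

lemma ext_wedge_add_left: "ext_wedge (x + x') y = ext_wedge x y + ext_wedge x' y"
  by (simp add: ext_wedge_def fun_eq_iff algebra_simps sum.distrib)

lemma ext_wedge_add_right: "ext_wedge x (y + y') = ext_wedge x y + ext_wedge x y'"
  by (simp add: ext_wedge_def fun_eq_iff algebra_simps sum.distrib)

lemma ext_wedge_uminus_right: "ext_wedge x (- y) = - ext_wedge x y"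
  by (simp add: ext_wedge_def fun_eq_iff sum_negf)

lemma ext_wedge_sum_left: "ext_wedge (\<Sum>a\<in>A. f a) y = (\<Sum>a\<in>A. ext_wedge (f a) y)"
proof (induction A rule: infinite_finite_induct)
  case (insert a A)
  then show ?case by (simp only: sum.insert[OF insert.hyps] ext_wedge_add_left insert.IH)
qed (simp_all add: ext_wedge_def fun_eq_iff)

lemma ext_wedge_sum_right: "ext_wedge x (\<Sum>a\<in>A. f a) = (\<Sum>a\<in>A. ext_wedge x (f a))"
proof (induction A rule: infinite_finite_induct)
  case (insert a A)
  then show ?case by (simp only: sum.insert[OF insert.hyps] ext_wedge_add_right insert.IH)
qed (simp_all add: ext_wedge_def fun_eq_iff)

lemma card_inversions_Un_right:
  assumes "finite A" "finite B" "finite C" "B \<inter> C = {}"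
  shows "card {(a, b). a \<in> A \<and> b \<in> B \<union> C \<and> b < a}
       = card {(a, b). a \<in> A \<and> b \<in> B \<and> b < a} + card {(a, b). a \<in> A \<and> b \<in> C \<and> b < a}"
proof -
  have "{(a, b). a \<in> A \<and> b \<in> B \<union> C \<and> b < a}
      = {(a, b). a \<in> A \<and> b \<in> B \<and> b < a} \<union> {(a, b). a \<in> A \<and> b \<in> C \<and> b < a}"
    by auto
  moreover have "finite {(a, b). a \<in> A \<and> b \<in> X \<and> b < a}" if "finite X" for X
    by (rule finite_subset[of _ "A \<times> X"]) (use assms that in auto)
  ultimately show ?thesis
    using assms by (simp add: card_Un_disjoint disjoint_iff)
qed

lemma card_inversions_Un_left:
  assumes "finite A" "finite B" "finite C" "A \<inter> B = {}"
  shows "card {(a, c). a \<in> A \<union> B \<and> c \<in> C \<and> c < a}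
       = card {(a, c). a \<in> A \<and> c \<in> C \<and> c < a} + card {(a, c). a \<in> B \<and> c \<in> C \<and> c < a}"
proof -
  have "{(a, c). a \<in> A \<union> B \<and> c \<in> C \<and> c < a}
      = {(a, c). a \<in> A \<and> c \<in> C \<and> c < a} \<union> {(a, c). a \<in> B \<and> c \<in> C \<and> c < a}"
    by auto
  moreover have "finite {(a, c). a \<in> X \<and> c \<in> C \<and> c < a}" if "finite X" for X
    by (rule finite_subset[of _ "X \<times> C"]) (use assms that in auto)
  ultimately show ?thesis
    using assms by (simp add: card_Un_disjoint disjoint_iff)
qed

lemma ext_sign_cocycle:
  assumes "finite A" "finite B" "finite C" "A \<inter> B = {}" "B \<inter> C = {}"
  shows "(ext_sign A (B \<union> C) * ext_sign B C :: 'a::comm_ring_1)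
       = ext_sign (A \<union> B) C * ext_sign A B"
  unfolding ext_sign_def card_inversions_Un_left[OF assms(1-4)]
    card_inversions_Un_right[OF assms(1-3,5)]
  by (simp add: power_add algebra_simps)

lemma ext_wedge_assoc: "ext_wedge x (ext_wedge y z) = ext_wedge (ext_wedge x y) z"
proof (rule ext)
  fix S :: "nat set"
  show "ext_wedge x (ext_wedge y z) S = ext_wedge (ext_wedge x y) z S"
  proof (cases "finite S")
    case False
    then show ?thesis by (simp add: ext_wedge_def)
  next
    case fin: True
    let ?l = "\<lambda>(A, B). ext_sign A (S - A) * ext_sign B (S - A - B) * x A * y B * z (S - A - B)"
    let ?r = "\<lambda>(C, A). ext_sign C (S - C) * ext_sign A (C - A) * x A * y (C - A) * z (S - C)"
    have lhs: "ext_wedge x (ext_wedge y z) S = (\<Sum>p\<in>(SIGMA A:Pow S. Pow (S - A)). ?l p)"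
    proof -
      have "ext_wedge x (ext_wedge y z) S = (\<Sum>A\<in>Pow S. \<Sum>B\<in>Pow (S - A). ?l (A, B))"
        unfolding ext_wedge_def by (simp add: sum_distrib_left mult_ac)
      then show ?thesis using fin by (simp add: sum.Sigma)
    qed
    have rhs: "ext_wedge (ext_wedge x y) z S = (\<Sum>p\<in>(SIGMA C:Pow S. Pow C). ?r p)"
    proof -
      have "ext_wedge (ext_wedge x y) z S = (\<Sum>C\<in>Pow S. \<Sum>A\<in>Pow C. ?r (C, A))"
        unfolding ext_wedge_def by (simp add: sum_distrib_left sum_distrib_right mult_ac)
      then show ?thesis using fin by (simp add: sum.Sigma finite_subset)
    qed
    have "?l (A, B) = ?r (A \<union> B, A)" if "A \<subseteq> S" "B \<subseteq> S - A" for A B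
    proof -
      have "finite A" "finite B" using that fin by (auto intro: finite_subset)
      then have "ext_sign A (B \<union> (S - A - B)) * ext_sign B (S - A - B)
               = (ext_sign (A \<union> B) (S - A - B) * ext_sign A B :: 'a)"
        using fin that by (intro ext_sign_cocycle) auto
      moreover have "S - A = B \<union> (S - A - B)" "S - (A \<union> B) = S - A - B" "A \<union> B - A = B"
        using that by auto
      ultimately show ?thesis by simp
    qed
    then show ?thesis unfolding lhs rhs
      by (intro sum.reindex_bij_witness[where j = "\<lambda>(A, B). (A \<union> B, A)"
            and i = "\<lambda>(C, A). (A, C - A)"]) auto
  qed
qed

section \<open>Degree bounds\<close>

definition ext_deg_ge :: "nat \<Rightarrow> nat \<Rightarrow> 'a::comm_ring_1 ext \<Rightarrow> bool" where
  "ext_deg_ge k d x \<longleftrightarrow> (\<forall>S. x S \<noteq> 0 \<longrightarrow> S \<subseteq> {..<k} \<and> d \<le> card S)"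

lemma ext_deg_ge_zero [simp]: "ext_deg_ge k d 0"
  by (simp add: ext_deg_ge_def)

lemma ext_deg_ge_add: "ext_deg_ge k d x \<Longrightarrow> ext_deg_ge k d y \<Longrightarrow> ext_deg_ge k d (x + y)"
  unfolding ext_deg_ge_def by (metis add.left_neutral add.right_neutral plus_fun_apply)

lemma ext_deg_ge_sum:
  "(\<And>a. a \<in> A \<Longrightarrow> ext_deg_ge k d (f a)) \<Longrightarrow> ext_deg_ge k d (\<Sum>a\<in>A. f a)"
  by (induction A rule: infinite_finite_induct) (auto intro: ext_deg_ge_add)

lemma ext_deg_ge_mono: "ext_deg_ge k d x \<Longrightarrow> d' \<le> d \<Longrightarrow> ext_deg_ge k d' x"
  by (auto simp: ext_deg_ge_def)

lemma ext_deg_ge_scalar: "ext_deg_ge k 0 (ext_scalar c)"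
  by (simp add: ext_deg_ge_def ext_scalar_def)

lemma ext_deg_ge_vec: "ext_deg_ge k 1 (ext_vec k v)"
proof -
  have "\<exists>i<k. S = {i}" if "ext_vec k v S \<noteq> 0" for S
    using that by (auto simp: ext_vec_def intro: ccontr)
  then show ?thesis by (fastforce simp: ext_deg_ge_def)
qed

lemma ext_deg_ge_wedge:
  assumes "ext_deg_ge k p x" "ext_deg_ge k q y"
  shows "ext_deg_ge k (p + q) (ext_wedge x y)"
  unfolding ext_deg_ge_def
proof (intro allI impI)
  fix S assume ne: "ext_wedge x y S \<noteq> 0"
  then have fin: "finite S"
    unfolding ext_wedge_def by (metis finite_Pow_iff sum.infinite)
  from ne obtain A where A: "A \<subseteq> S" "ext_sign A (S - A) * x A * y (S - A) \<noteq> 0"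
    unfolding ext_wedge_def by (metis (no_types, lifting) PowD sum.neutral)
  then have "x A \<noteq> 0" "y (S - A) \<noteq> 0" by auto
  then have "A \<subseteq> {..<k}" "p \<le> card A" "S - A \<subseteq> {..<k}" "q \<le> card (S - A)"
    using assms by (auto simp: ext_deg_ge_def)
  moreover have "card S = card A + card (S - A)"
    using A(1) fin by (metis card_Diff_subset finite_subset le_add_diff_inverse card_mono)
  ultimately show "S \<subseteq> {..<k} \<and> p + q \<le> card S" by auto
qed

lemma ext_deg_ge_Suc_eq_zero: "ext_deg_ge k (Suc k) x \<Longrightarrow> x = 0"
  unfolding ext_deg_ge_def fun_eq_iff
  by (metis card_lessThan card_mono finite_lessThan not_less_eq_eq zero_fun_apply)

lemma ext_wedge_one_right: "ext_deg_ge k d x \<Longrightarrow> ext_wedge x (ext_scalar 1) = x"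
proof (rule ext)
  fix S assume deg: "ext_deg_ge k d x"
  show "ext_wedge x (ext_scalar 1) S = x S"
  proof (cases "finite S")
    case False
    then have "x S = 0" using deg finite_subset[of S "{..<k}"] by (auto simp: ext_deg_ge_def)
    then show ?thesis using False by (simp add: ext_wedge_def)
  next
    case True
    have "ext_wedge x (ext_scalar 1) S = (\<Sum>A\<in>Pow S. if A = S then ext_sign S {} * x S else 0)"
      unfolding ext_wedge_def ext_scalar_def by (rule sum.cong) auto
    then show ?thesis using True by (simp add: ext_sign_def)
  qed
qed

section \<open>Matrices over the exterior algebra\<close>

lemma ext_mat_mul_eq_sum: "ext_mat_mul N X Y = (\<lambda>i j. \<Sum>l\<in>N. ext_wedge (X i l) (Y l j))"
  by (simp add: ext_mat_mul_def ext_sum_eq_sum)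

lemma ext_mat_mul_assoc:
  "ext_mat_mul N (ext_mat_mul N X Y) Z = ext_mat_mul N X (ext_mat_mul N Y Z)"
  unfolding ext_mat_mul_eq_sum ext_wedge_sum_left ext_wedge_sum_right ext_wedge_assoc
  by (intro ext sum.swap)

lemma ext_mat_mul_add_left:
  "ext_mat_mul N (X + X') Y = ext_mat_mul N X Y + ext_mat_mul N X' Y"
  by (simp add: ext_mat_mul_eq_sum fun_eq_iff ext_wedge_add_left sum.distrib)

lemma ext_mat_mul_add_right:
  "ext_mat_mul N X (Y + Y') = ext_mat_mul N X Y + ext_mat_mul N X Y'"
  by (simp add: ext_mat_mul_eq_sum fun_eq_iff ext_wedge_add_right sum.distrib)

lemma ext_mat_mul_sum_left:
  "ext_mat_mul N (\<Sum>a\<in>A. f a) Y = (\<Sum>a\<in>A. ext_mat_mul N (f a) Y)"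
  unfolding ext_mat_mul_eq_sum ext_wedge_sum_left sum_fun_apply
  by (intro ext sum.swap)

lemma ext_mat_mul_sum_right:
  "ext_mat_mul N X (\<Sum>a\<in>A. f a) = (\<Sum>a\<in>A. ext_mat_mul N X (f a))"
  unfolding ext_mat_mul_eq_sum ext_wedge_sum_right sum_fun_apply
  by (intro ext sum.swap)

lemma ext_mat_mul_subset:
  assumes "finite N" "I \<subseteq> N" "\<And>i l j. l \<in> N - I \<Longrightarrow> ext_wedge (X i l) (Y l j) = 0"
  shows "ext_mat_mul N X Y = ext_mat_mul I X Y"
proof -
  have "(\<Sum>l\<in>N. ext_wedge (X i l) (Y l j)) = (\<Sum>l\<in>I. ext_wedge (X i l) (Y l j))" for i j
    by (rule sum.mono_neutral_right) (use assms in auto)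
  then show ?thesis by (simp add: ext_mat_mul_eq_sum)
qed

lemma ext_mat_mul_pow_0_right:
  assumes "finite I" "\<And>i j. j \<notin> I \<Longrightarrow> X i j = 0" "\<And>i j. ext_deg_ge k d (X i j)"
  shows "ext_mat_mul I X (ext_mat_pow I A 0) = X"
proof (intro ext)
  fix i j S
  have "ext_mat_mul I X (ext_mat_pow I A 0) i j
      = (\<Sum>l\<in>I. if l = j then ext_wedge (X i l) (ext_scalar 1) else 0)"
    unfolding ext_mat_mul_eq_sum by (rule sum.cong) (auto simp: ext_zero_eq_zero)
  also have "\<dots> = X i j"
    using assms(1,2) by (simp add: ext_wedge_one_right[OF assms(3)])
  finally show "ext_mat_mul I X (ext_mat_pow I A 0) i j S = X i j S" by simp
qed

definition ext_mat_deg_ge :: "nat \<Rightarrow> nat \<Rightarrow> (nat \<Rightarrow> nat \<Rightarrow> 'a::comm_ring_1 ext) \<Rightarrow> bool" where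
  "ext_mat_deg_ge k d X \<longleftrightarrow> (\<forall>i j. ext_deg_ge k d (X i j))"

lemma ext_mat_deg_ge_mul:
  "ext_mat_deg_ge k p X \<Longrightarrow> ext_mat_deg_ge k q Y \<Longrightarrow> ext_mat_deg_ge k (p + q) (ext_mat_mul N X Y)"
  unfolding ext_mat_deg_ge_def ext_mat_mul_eq_sum by (auto intro!: ext_deg_ge_sum ext_deg_ge_wedge)

lemma ext_mat_deg_ge_mono: "ext_mat_deg_ge k d X \<Longrightarrow> d' \<le> d \<Longrightarrow> ext_mat_deg_ge k d' X"
  unfolding ext_mat_deg_ge_def by (auto intro: ext_deg_ge_mono)

lemma ext_mat_deg_ge_sum:
  "(\<And>a. a \<in> A \<Longrightarrow> ext_mat_deg_ge k d (f a)) \<Longrightarrow> ext_mat_deg_ge k d (\<Sum>a\<in>A. f a)"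
  unfolding ext_mat_deg_ge_def by (auto simp: sum_fun_apply intro!: ext_deg_ge_sum)

lemma ext_mat_deg_ge_Suc_eq_zero: "ext_mat_deg_ge k (Suc k) X \<Longrightarrow> X = 0"
  unfolding ext_mat_deg_ge_def by (metis ext_deg_ge_Suc_eq_zero zero_fun_apply ext)

lemma ext_mat_deg_ge_pow: "ext_mat_deg_ge k d X \<Longrightarrow> ext_mat_deg_ge k (m * d) (ext_mat_pow N X m)"
proof (induction m)
  case 0
  then show ?case by (simp add: ext_mat_deg_ge_def ext_deg_ge_scalar ext_zero_eq_zero)
next
  case (Suc m)
  then show ?case using ext_mat_deg_ge_mul[of k "m * d" _ d X N] by (simp add: add.commute)
qed

lemma resolvent_expansion:
  fixes I :: "nat set" and Q Q' D :: "nat \<Rightarrow> nat \<Rightarrow> 'a::comm_ring_1 ext"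
  defines "R \<equiv> \<lambda>t. ext_mat_mul I D (ext_mat_pow I (ext_mat_mul I Q D) (t - 1))"
  assumes resolvent: "Q' = Q + ext_mat_mul I (ext_mat_mul I Q D) Q'"
    and R_1: "R 1 = D"
  shows "Q' = Q + (\<Sum>t\<in>{1..T}. ext_mat_mul I (ext_mat_mul I Q (R t)) Q)
            + ext_mat_mul I (ext_mat_mul I Q (R (Suc T))) Q'"
proof (induction T)
  case 0
  show ?case
    by (subst resolvent) (simp add: R_1[unfolded One_nat_def])
next
  case (Suc T)
  have R_Suc: "R (Suc (Suc T)) = ext_mat_mul I (R (Suc T)) (ext_mat_mul I Q D)"
    by (simp add: R_def ext_mat_mul_assoc)
  have "ext_mat_mul I (ext_mat_mul I Q (R (Suc T))) Q'
      = ext_mat_mul I (ext_mat_mul I Q (R (Suc T))) (Q + ext_mat_mul I (ext_mat_mul I Q D) Q')"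
    by (subst resolvent) (rule refl)
  also have "\<dots> = ext_mat_mul I (ext_mat_mul I Q (R (Suc T))) Q
                 + ext_mat_mul I (ext_mat_mul I Q (R (Suc (Suc T)))) Q'"
    by (simp only: ext_mat_mul_add_right ext_mat_mul_assoc R_Suc)
  finally have step: "ext_mat_mul I (ext_mat_mul I Q (R (Suc T))) Q'
      = ext_mat_mul I (ext_mat_mul I Q (R (Suc T))) Q
        + ext_mat_mul I (ext_mat_mul I Q (R (Suc (Suc T)))) Q'" .
  have "(\<Sum>t\<in>{1..Suc T}. ext_mat_mul I (ext_mat_mul I Q (R t)) Q)
      = (\<Sum>t\<in>{1..T}. ext_mat_mul I (ext_mat_mul I Q (R t)) Q)
        + ext_mat_mul I (ext_mat_mul I Q (R (Suc T))) Q"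
    by (simp only: sum.cl_ivl_Suc) simp
  then show ?case
    by (subst Suc.IH) (simp only: step add.assoc)
qed

lemma sum_entries_ext_mat_mul_mul:
  "(\<Sum>(i, j)\<in>N \<times> N. ext_mat_mul I (ext_mat_mul I Q R) Q i j) =
   (\<Sum>(a, b)\<in>I \<times> I. ext_wedge (ext_wedge (\<Sum>i\<in>N. Q i a) (R a b)) (\<Sum>j\<in>N. Q b j))"
proof -
  let ?h = "\<lambda>i j a b. ext_wedge (ext_wedge (Q i a) (R a b)) (Q b j)"
  have "(\<Sum>(i, j)\<in>N \<times> N. ext_mat_mul I (ext_mat_mul I Q R) Q i j)
      = (\<Sum>b\<in>I. \<Sum>a\<in>I. \<Sum>i\<in>N. \<Sum>j\<in>N. ?h i j a b)"
    unfolding sum.cartesian_product[symmetric] ext_mat_mul_eq_sum ext_wedge_sum_left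
    by (simp only: sum.swap[of _ N I])
  also have "\<dots> = (\<Sum>a\<in>I. \<Sum>b\<in>I. \<Sum>j\<in>N. \<Sum>i\<in>N. ?h i j a b)"
    by (subst sum.swap, intro sum.cong refl sum.swap)
  also have "\<dots> = (\<Sum>(a, b)\<in>I \<times> I. ext_wedge (ext_wedge (\<Sum>i\<in>N. Q i a) (R a b)) (\<Sum>j\<in>N. Q b j))"
    unfolding sum.cartesian_product[symmetric] ext_wedge_sum_left ext_wedge_sum_right ..
  finally show ?thesis .
qed

section \<open>Walks grouped by length\<close>

text \<open>walk_mat m collects the walks with m edges, i.e. Suc m vertices.\<close>

definition walk_mat :: "nat \<Rightarrow> nat \<Rightarrow> (nat \<times> nat) set \<Rightarrow> (nat \<Rightarrow> nat \<Rightarrow> 'a::comm_ring_1)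
    \<Rightarrow> (nat \<Rightarrow> nat \<Rightarrow> 'a) \<Rightarrow> nat \<Rightarrow> nat \<Rightarrow> nat \<Rightarrow> 'a ext" where
  "walk_mat k n E \<chi> y m i j =
     (\<Sum>w\<in>{w \<in> walks n E. length w = Suc m \<and> hd w = i \<and> last w = j}. walk_ext k \<chi> y w)"

definition step_mat :: "nat \<Rightarrow> (nat \<times> nat) set \<Rightarrow> (nat \<Rightarrow> nat \<Rightarrow> 'a::comm_ring_1)
    \<Rightarrow> (nat \<Rightarrow> nat \<Rightarrow> 'a) \<Rightarrow> nat \<Rightarrow> nat \<Rightarrow> 'a ext" where
  "step_mat k E \<chi> y i l =
     (if (i, l) \<in> E then ext_wedge (ext_vec k (\<chi> i)) (ext_scalar (y i l)) else 0)"

definition vertex_mat :: "nat \<Rightarrow> nat \<Rightarrow> (nat \<Rightarrow> nat \<Rightarrow> 'a::comm_ring_1) \<Rightarrow> nat \<Rightarrow> nat \<Rightarrow> 'a ext" where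
  "vertex_mat k n \<chi> i j = (if i = j \<and> i < n then ext_vec k (\<chi> i) else 0)"

lemma is_walk_nonempty: "is_walk E w \<Longrightarrow> w \<noteq> []"
  by (cases w) auto

lemma is_walk_Cons_iff: "w \<noteq> [] \<Longrightarrow> is_walk E (v # w) \<longleftrightarrow> (v, hd w) \<in> E \<and> is_walk E w"
  by (cases w) auto

lemma walk_ext_Cons: "w \<noteq> [] \<Longrightarrow> walk_ext k \<chi> y (v # w) =
    ext_wedge (ext_wedge (ext_vec k (\<chi> v)) (ext_scalar (y v (hd w)))) (walk_ext k \<chi> y w)"
  by (cases w) (auto simp: ext_wedge_assoc)

lemma finite_walks_length_le: "finite {w \<in> walks n E. length w \<le> m \<and> P w}"
  by (rule finite_subset[OF _ finite_lists_length_le[of "{..<n}" m]]) (auto simp: walks_def)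

lemma walk_ext_deg_ge: "w \<noteq> [] \<Longrightarrow> ext_deg_ge k (length w) (walk_ext k \<chi> y w)"
proof (induction k \<chi> y w rule: walk_ext.induct)
  case (2 k \<chi> y v)
  then show ?case using ext_deg_ge_vec by simp
next
  case (3 k \<chi> y v u w)
  have "ext_deg_ge k (1 + (0 + length (u # w))) (walk_ext k \<chi> y (v # u # w))"
    unfolding walk_ext.simps
    by (intro ext_deg_ge_wedge ext_deg_ge_vec ext_deg_ge_scalar) (use 3 in simp)
  then show ?case by simp
qed simp

lemma walk_mat_deg_ge: "ext_mat_deg_ge k (Suc m) (walk_mat k n E \<chi> y m)"
  unfolding ext_mat_deg_ge_def walk_mat_def
  by (auto simp: walks_def intro!: ext_deg_ge_sum) (metis is_walk_nonempty walk_ext_deg_ge)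

lemma Qmat_eq_sum_walk_mat: "Qmat k n E \<chi> y = (\<Sum>m<k. walk_mat k n E \<chi> y m)"
proof (intro ext)
  fix i j S
  let ?W = "{w \<in> walks n E. length w \<le> k \<and> hd w = i \<and> last w = j}"
  have "sum (walk_ext k \<chi> y) ?W = (\<Sum>m<k. sum (walk_ext k \<chi> y) {w \<in> ?W. length w - 1 = m})"
  proof (rule sum.group[symmetric])
    show "finite ?W" by (rule finite_walks_length_le)
    show "(\<lambda>w. length w - 1) ` ?W \<subseteq> {..<k}"
    proof
      fix m assume "m \<in> (\<lambda>w. length w - 1) ` ?W"
      then obtain w where w: "w \<in> ?W" "m = length w - 1" by blast
      then have "w \<noteq> []" by (auto simp: walks_def dest: is_walk_nonempty)
      with w show "m \<in> {..<k}" by (cases w) auto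
    qed
  qed simp
  also have "\<dots> = (\<Sum>m<k. walk_mat k n E \<chi> y m i j)"
  proof (rule sum.cong[OF refl])
    fix m
    have "{w \<in> ?W. length w - 1 = m} = {w \<in> walks n E. length w = Suc m \<and> hd w = i \<and> last w = j}"
      if "m < k"
      using that by (auto simp: walks_def dest: is_walk_nonempty)
    then show "m \<in> {..<k} \<Longrightarrow> sum (walk_ext k \<chi> y) {w \<in> ?W. length w - 1 = m} = walk_mat k n E \<chi> y m i j"
      by (simp add: walk_mat_def)
  qed
  finally show "Qmat k n E \<chi> y i j S = (\<Sum>m<k. walk_mat k n E \<chi> y m) i j S"
    by (simp add: Qmat_def ext_sum_eq_sum sum_fun_apply)
qed

lemma Qmat_deg_ge: "ext_mat_deg_ge k 1 (Qmat k n E \<chi> y)"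
  unfolding Qmat_eq_sum_walk_mat
  by (intro ext_mat_deg_ge_sum ext_mat_deg_ge_mono[OF walk_mat_deg_ge]) simp

lemma Zwalks_eq_sum_Qmat: "Zwalks k n E \<chi> y = (\<Sum>(i, j)\<in>{..<n} \<times> {..<n}. Qmat k n E \<chi> y i j)"
proof -
  let ?W = "{w \<in> walks n E. length w \<le> k}"
  have "sum (walk_ext k \<chi> y) ?W
      = (\<Sum>p\<in>{..<n} \<times> {..<n}. sum (walk_ext k \<chi> y) {w \<in> ?W. (hd w, last w) = p})"
  proof (rule sum.group[symmetric])
    show "finite ?W" using finite_walks_length_le[of n E k "\<lambda>_. True"] by simp
    show "(\<lambda>w. (hd w, last w)) ` ?W \<subseteq> {..<n} \<times> {..<n}"
      by (auto simp: walks_def dest!: is_walk_nonempty)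
        (meson hd_in_set last_in_set lessThan_iff subsetD)+
  qed simp
  also have "\<dots> = (\<Sum>(i, j)\<in>{..<n} \<times> {..<n}. Qmat k n E \<chi> y i j)"
  proof (rule sum.cong[OF refl])
    fix p :: "nat \<times> nat"
    obtain i j where p: "p = (i, j)" by fastforce
    have "{w \<in> ?W. (hd w, last w) = p} = {w \<in> walks n E. length w \<le> k \<and> hd w = i \<and> last w = j}"
      using p by auto
    then show "sum (walk_ext k \<chi> y) {w \<in> ?W. (hd w, last w) = p}
        = (case p of (i, j) \<Rightarrow> Qmat k n E \<chi> y i j)"
      using p by (simp add: Qmat_def ext_sum_eq_sum)
  qed
  finally show ?thesis by (simp add: Zwalks_def ext_sum_eq_sum)
qed

lemma walk_mat_0: "walk_mat k n E \<chi> y 0 = vertex_mat k n \<chi>"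
proof (intro ext)
  fix i j S
  have "{w \<in> walks n E. length w = Suc 0 \<and> hd w = i \<and> last w = j}
      = (if i = j \<and> i < n then {[i]} else {})"
    by (auto simp: walks_def length_Suc_conv)
  then show "walk_mat k n E \<chi> y 0 i j S = vertex_mat k n \<chi> i j S"
    by (simp add: walk_mat_def vertex_mat_def)
qed

lemma walks_Suc_eq_Cons_image:
  assumes "E \<subseteq> {..<n} \<times> {..<n}"
  shows "{w \<in> walks n E. length w = Suc (Suc m) \<and> hd w = i \<and> last w = j}
       = (\<lambda>(l, w). i # w) ` (SIGMA l:{l. (i, l) \<in> E}.
           {w \<in> walks n E. length w = Suc m \<and> hd w = l \<and> last w = j})"
    (is "?T = ?C")
proof
  show "?T \<subseteq> ?C"
  proof
    fix w assume w: "w \<in> ?T"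
    then obtain w' where w': "w = i # w'"
      by (cases w) (auto simp: walks_def)
    with w have "w' \<noteq> []" by auto
    then have "(hd w', w') \<in> (SIGMA l:{l. (i, l) \<in> E}.
        {w \<in> walks n E. length w = Suc m \<and> hd w = l \<and> last w = j})"
      using w w' by (auto simp: walks_def is_walk_Cons_iff)
    then show "w \<in> ?C" using w' by force
  qed
  show "?C \<subseteq> ?T"
  proof
    fix w assume "w \<in> ?C"
    then obtain w' where w': "w = i # w'" "(i, hd w') \<in> E" "w' \<in> walks n E"
      "length w' = Suc m" "last w' = j"
      by auto
    then have "w' \<noteq> []" by auto
    with w' assms show "w \<in> ?T" by (auto simp: walks_def is_walk_Cons_iff)
  qed
qed

lemma walk_mat_Suc:
  assumes E: "E \<subseteq> {..<n} \<times> {..<n}"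
  shows "walk_mat k n E \<chi> y (Suc m) = ext_mat_mul {..<n} (step_mat k E \<chi> y) (walk_mat k n E \<chi> y m)"
proof (intro ext)
  fix i j S
  let ?U = "\<lambda>l. {w \<in> walks n E. length w = Suc m \<and> hd w = l \<and> last w = j}"
  let ?L = "{l. (i, l) \<in> E}"
  have fin_L: "finite ?L" by (rule finite_subset[of _ "{..<n}"]) (use E in auto)
  have fin_U: "finite (?U l)" for l
    by (rule finite_subset[OF _ finite_walks_length_le[of n E "Suc m" "\<lambda>_. True"]]) auto
  have "walk_mat k n E \<chi> y (Suc m) i j = (\<Sum>l\<in>?L. \<Sum>w\<in>?U l. walk_ext k \<chi> y (i # w))"
    unfolding walk_mat_def walks_Suc_eq_Cons_image[OF E]
    by (subst sum.reindex) (auto simp: inj_on_def sum.Sigma fin_L fin_U case_prod_unfold)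
  also have "\<dots> = (\<Sum>l\<in>?L. ext_wedge (step_mat k E \<chi> y i l) (walk_mat k n E \<chi> y m l j))"
    unfolding walk_mat_def ext_wedge_sum_right
    by (intro sum.cong refl)
      (auto simp: walks_def step_mat_def walk_ext_Cons dest: is_walk_nonempty)
  also have "\<dots> = (\<Sum>l<n. ext_wedge (step_mat k E \<chi> y i l) (walk_mat k n E \<chi> y m l j))"
    by (rule sum.mono_neutral_left) (use E in \<open>auto simp: step_mat_def\<close>)
  finally show "walk_mat k n E \<chi> y (Suc m) i j S
      = ext_mat_mul {..<n} (step_mat k E \<chi> y) (walk_mat k n E \<chi> y m) i j S"
    by (simp add: ext_mat_mul_eq_sum)
qed

section \<open>Updating the edge set\<close>

locale edge_update =
  fixes n k :: nat and E Ep Em E' :: "(nat \<times> nat) set"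
    and \<chi> :: "nat \<Rightarrow> nat \<Rightarrow> 'a::comm_ring_1" and y :: "nat \<Rightarrow> nat \<Rightarrow> 'a"
    and I :: "nat set" and \<Delta> :: "nat \<Rightarrow> nat \<Rightarrow> 'a ext"
  assumes E_subset: "E \<subseteq> {..<n} \<times> {..<n}"
    and Ep_subset: "Ep \<subseteq> {..<n} \<times> {..<n}"
    and Ep_disjoint: "Ep \<inter> E = {}"
    and Em_subset: "Em \<subseteq> E"
    and E'_eq: "E' = (E - Em) \<union> Ep"
    and I_eq: "I = {i. \<exists>j. (i, j) \<in> Ep \<union> Em \<or> (j, i) \<in> Ep \<union> Em}"
    and Delta_eq: "\<Delta> = (\<lambda>i j. if (i, j) \<in> Ep then ext_scalar (y i j)
                     else if (i, j) \<in> Em then ext_scalar (- y i j) else ext_zero)"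
begin

abbreviation "N \<equiv> {..<n}"
abbreviation "W \<equiv> walk_mat k n E \<chi> y"
abbreviation "W' \<equiv> walk_mat k n E' \<chi> y"
abbreviation "Q \<equiv> Qmat k n E \<chi> y"
abbreviation "Q' \<equiv> Qmat k n E' \<chi> y"

lemma E'_subset: "E' \<subseteq> N \<times> N"
  using E_subset Ep_subset by (auto simp: E'_eq)

lemma I_subset: "I \<subseteq> N"
  using E_subset Ep_subset Em_subset by (auto simp: I_eq)

lemma finite_I: "finite I"
  using I_subset finite_subset by blast

lemma Delta_eq_zero: "i \<notin> I \<or> j \<notin> I \<Longrightarrow> \<Delta> i j = 0"
  by (auto simp: Delta_eq I_eq ext_zero_eq_zero)

lemma Delta_deg_ge: "ext_mat_deg_ge k 0 \<Delta>"
  by (auto simp: ext_mat_deg_ge_def Delta_eq ext_deg_ge_scalar ext_zero_eq_zero)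

lemma step_mat_update:
  "step_mat k E' \<chi> y = step_mat k E \<chi> y + ext_mat_mul N (vertex_mat k n \<chi>) \<Delta>"
proof (intro ext)
  fix i l S
  have "ext_mat_mul N (vertex_mat k n \<chi>) \<Delta> i l
      = (if i < n then ext_wedge (ext_vec k (\<chi> i)) (\<Delta> i l) else 0)"
  proof -
    have "ext_mat_mul N (vertex_mat k n \<chi>) \<Delta> i l
        = (\<Sum>i'\<in>N. if i' = i then ext_wedge (ext_vec k (\<chi> i)) (\<Delta> i l) else 0)"
      unfolding ext_mat_mul_eq_sum by (rule sum.cong) (auto simp: vertex_mat_def)
    then show ?thesis by simp
  qed
  also have "\<dots> = ext_wedge (ext_vec k (\<chi> i)) (\<Delta> i l)"
    using Ep_subset Em_subset E_subset by (auto simp: Delta_eq ext_zero_eq_zero)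
  finally have "ext_mat_mul N (vertex_mat k n \<chi>) \<Delta> i l = ext_wedge (ext_vec k (\<chi> i)) (\<Delta> i l)" .
  moreover have "step_mat k E' \<chi> y i l = step_mat k E \<chi> y i l + ext_wedge (ext_vec k (\<chi> i)) (\<Delta> i l)"
    using Ep_disjoint Em_subset
    by (auto simp: step_mat_def Delta_eq E'_eq ext_scalar_uminus ext_wedge_uminus_right ext_zero_eq_zero)
  ultimately show "step_mat k E' \<chi> y i l S
      = (step_mat k E \<chi> y + ext_mat_mul N (vertex_mat k n \<chi>) \<Delta>) i l S"
    by simp
qed

text \<open>A walk of G' either uses no updated edge, or splits at its first \<Delta>-step.\<close>

lemma walk_mat_update:
  "W' m = W m + (\<Sum>q<m. ext_mat_mul N (ext_mat_mul N (W (m - Suc q)) \<Delta>) (W' q))"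
proof (induction m)
  case 0
  then show ?case by (simp add: walk_mat_0)
next
  case (Suc m)
  let ?B = "step_mat k E \<chi> y"
  have shift: "ext_mat_mul N ?B (ext_mat_mul N (ext_mat_mul N (W (m - Suc q)) \<Delta>) (W' q))
      = ext_mat_mul N (ext_mat_mul N (W (Suc m - Suc q)) \<Delta>) (W' q)" if "q < m" for q
  proof -
    have "Suc m - Suc q = Suc (m - Suc q)" using that by simp
    then show ?thesis by (simp only: walk_mat_Suc[OF E_subset] ext_mat_mul_assoc)
  qed
  have "W' (Suc m) = ext_mat_mul N ?B (W' m) + ext_mat_mul N (ext_mat_mul N (vertex_mat k n \<chi>) \<Delta>) (W' m)"
    by (simp add: walk_mat_Suc[OF E'_subset] step_mat_update ext_mat_mul_add_left)
  also have "ext_mat_mul N ?B (W' m)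
      = W (Suc m) + (\<Sum>q<m. ext_mat_mul N (ext_mat_mul N (W (Suc m - Suc q)) \<Delta>) (W' q))"
    by (subst Suc.IH)
      (simp add: ext_mat_mul_add_right ext_mat_mul_sum_right walk_mat_Suc[OF E_subset] shift)
  also have "ext_mat_mul N (ext_mat_mul N (vertex_mat k n \<chi>) \<Delta>) (W' m)
      = ext_mat_mul N (ext_mat_mul N (W (Suc m - Suc m)) \<Delta>) (W' m)"
    by (simp add: walk_mat_0)
  finally show ?case by (simp add: add.assoc)
qed

lemma walk_mat_Delta_walk_mat_eq_zero:
  assumes "k \<le> Suc (p + q)"
  shows "ext_mat_mul N (ext_mat_mul N (W p) \<Delta>) (W' q) = 0"
proof -
  have "ext_mat_deg_ge k (Suc p + 0 + Suc q) (ext_mat_mul N (ext_mat_mul N (W p) \<Delta>) (W' q))"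
    by (intro ext_mat_deg_ge_mul walk_mat_deg_ge Delta_deg_ge)
  then show ?thesis
    using assms by (intro ext_mat_deg_ge_Suc_eq_zero) (erule ext_mat_deg_ge_mono, simp)
qed

lemma Qmat_update_all_vertices: "Q' = Q + ext_mat_mul N (ext_mat_mul N Q \<Delta>) Q'"
proof -
  let ?g = "\<lambda>p q. ext_mat_mul N (ext_mat_mul N (W p) \<Delta>) (W' q)"
  have "Q' = (\<Sum>m<k. W m + (\<Sum>q<m. ?g (m - Suc q) q))"
    unfolding Qmat_eq_sum_walk_mat by (rule sum.cong[OF refl], rule walk_mat_update)
  also have "\<dots> = Q + (\<Sum>m<k. \<Sum>q<m. ?g (m - Suc q) q)"
    by (simp add: sum.distrib Qmat_eq_sum_walk_mat)
  also have "(\<Sum>m<k. \<Sum>q<m. ?g (m - Suc q) q) = (\<Sum>(p, q)\<in>{(p, q). Suc (p + q) < k}. ?g p q)"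
    by (subst sum.Sigma, simp, simp)
      (rule sum.reindex_bij_witness[where j = "\<lambda>(m, q). (m - Suc q, q)"
          and i = "\<lambda>(p, q). (Suc (p + q), q)"], auto)
  also have "\<dots> = (\<Sum>(p, q)\<in>{..<k} \<times> {..<k}. ?g p q)"
    by (rule sum.mono_neutral_left) (auto intro!: walk_mat_Delta_walk_mat_eq_zero)
  also have "\<dots> = ext_mat_mul N (ext_mat_mul N Q \<Delta>) Q'"
    unfolding Qmat_eq_sum_walk_mat ext_mat_mul_sum_left ext_mat_mul_sum_right
      sum.cartesian_product[symmetric]
    by (rule sum.swap)
  finally show ?thesis .
qed

lemma Qmat_update: "Q' = Q + ext_mat_mul I (ext_mat_mul I Q \<Delta>) Q'"
proof -
  have QD: "ext_mat_mul N Q \<Delta> = ext_mat_mul I Q \<Delta>"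
    by (rule ext_mat_mul_subset) (auto simp: I_subset Delta_eq_zero)
  have "ext_mat_mul I Q \<Delta> i l = 0" if "l \<notin> I" for i l
    using that by (simp add: ext_mat_mul_eq_sum Delta_eq_zero)
  then have "ext_mat_mul N (ext_mat_mul I Q \<Delta>) Q' = ext_mat_mul I (ext_mat_mul I Q \<Delta>) Q'"
    by (intro ext_mat_mul_subset) (auto simp: I_subset)
  then show ?thesis
    using Qmat_update_all_vertices by (simp add: QD)
qed

abbreviation R :: "nat \<Rightarrow> nat \<Rightarrow> nat \<Rightarrow> 'a ext" where
  "R t \<equiv> ext_mat_mul I \<Delta> (ext_mat_pow I (ext_mat_mul I Q \<Delta>) (t - 1))"

lemma Qmat_update_expansion:
  "Q' = Q + (\<Sum>t\<in>{1..k}. ext_mat_mul I (ext_mat_mul I Q (R t)) Q)"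
proof -
  have "R 1 = \<Delta>"
    unfolding diff_self_eq_0
    by (rule ext_mat_mul_pow_0_right[where k = k and d = 0])
      (use finite_I Delta_eq_zero Delta_deg_ge in \<open>auto simp: ext_mat_deg_ge_def\<close>)
  then have expansion: "Q' = Q + (\<Sum>t\<in>{1..k}. ext_mat_mul I (ext_mat_mul I Q (R t)) Q)
      + ext_mat_mul I (ext_mat_mul I Q (R (Suc k))) Q'"
    using resolvent_expansion[OF Qmat_update, of k] by simp
  have "ext_mat_deg_ge k (1 + (0 + (Suc k - 1) * (1 + 0)) + 1) (ext_mat_mul I (ext_mat_mul I Q (R (Suc k))) Q')"
    by (intro ext_mat_deg_ge_mul ext_mat_deg_ge_pow Qmat_deg_ge Delta_deg_ge)
  then have "ext_mat_mul I (ext_mat_mul I Q (R (Suc k))) Q' = 0"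
    by (intro ext_mat_deg_ge_Suc_eq_zero) (erule ext_mat_deg_ge_mono, simp)
  with expansion show ?thesis by simp
qed

end

theorem mainTheorem9:
  fixes n k :: nat
    and E Ep Em :: "(nat \<times> nat) set"
    and \<chi> :: "nat \<Rightarrow> nat \<Rightarrow> 'a::field"
    and y :: "nat \<Rightarrow> nat \<Rightarrow> 'a"
  assumes "k \<ge> 1"
    and "E \<subseteq> {..<n} \<times> {..<n}"
    and "Ep \<subseteq> {..<n} \<times> {..<n}"
    and "Ep \<inter> E = {}"
    and "Em \<subseteq> E"
  defines "E' \<equiv> (E - Em) \<union> Ep"
    and "I \<equiv> {i. \<exists>j. (i, j) \<in> Ep \<union> Em \<or> (j, i) \<in> Ep \<union> Em}"
    and "\<Delta> \<equiv> (\<lambda>i j. if (i, j) \<in> Ep then ext_scalar (y i j)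
                     else if (i, j) \<in> Em then ext_scalar (- y i j) else ext_zero)"
  shows "Zwalks k n E' \<chi> y =
    ext_add (Zsum k n E \<chi> y)
      (ext_sum (\<lambda>t. ext_sum (\<lambda>(a, b).
          ext_wedge (ext_wedge (Fvec k n E \<chi> y a)
             (ext_mat_mul I \<Delta> (ext_mat_pow I (ext_mat_mul I (Qmat k n E \<chi> y) \<Delta>) (t - 1)) a b))
           (Svec k n E \<chi> y b)) (I \<times> I)) {1..k})"
proof -
  interpret edge_update n k E Ep Em E' \<chi> y I \<Delta>
    using assms by unfold_locales (simp_all add: E'_def I_def \<Delta>_def)
  have "Zwalks k n E' \<chi> y = (\<Sum>(i, j)\<in>N \<times> N. Q' i j)"
    by (rule Zwalks_eq_sum_Qmat)
  also have "\<dots> = (\<Sum>(i, j)\<in>N \<times> N. Q i j + (\<Sum>t\<in>{1..k}. ext_mat_mul I (ext_mat_mul I Q (R t)) Q i j))"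
    unfolding case_prod_unfold
    by (subst Qmat_update_expansion) (simp only: plus_fun_apply sum_fun_apply)
  also have "\<dots> = (\<Sum>(i, j)\<in>N \<times> N. Q i j)
      + (\<Sum>t\<in>{1..k}. \<Sum>(i, j)\<in>N \<times> N. ext_mat_mul I (ext_mat_mul I Q (R t)) Q i j)"
    unfolding case_prod_unfold by (simp only: sum.distrib sum.swap[of _ "N \<times> N"])
  finally show ?thesis
    unfolding sum_entries_ext_mat_mul_mul ext_add_eq_plus ext_sum_eq_sum Zsum_def Fvec_def Svec_def .
qed

end
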